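(* Let $a>0$, $y_1\in\mathbb{R}$, $\alpha\in(0,\frac{\pi}{2})$ and let $f:\Omega\to\mathbb{C}$ be holomorphic on an open set $\Omega\subseteq\mathbb{C}$ containing $S^+_\alpha$. Then: (i) If $|f(z)|\le Ae^{B|z|}$ for all $z\in S^+_\alpha$ and some $A,B\ge0$, then for every $y_0\in\mathbb{R}$ $$\lim_{\varepsilon\to0^+}\int_0^\infty e^{-\varepsilon(y-y_0)^2}e^{ia(y-y_1)^2}f(y)\,dy=e^{i\alpha}\int_0^\infty e^{ia(ye^{i\alpha}-y_1)^2}f(ye^{i\alpha})\,dy,$$ where both integrands are absolutely integrable on $(0,\infty)$. (ii) If $|f(z)|\le Ae^{B\,\mathrm{Im}(z)}$ for all $z\in S^+_\alpha$ and some $A,B\ge0$, then $$\lim_{R\to\infty}\int_0^R e^{ia(y-y_1)^2}f(y)\,dy=e^{i\alpha}\int_0^\infty e^{ia(ye^{i\alpha}-y_1)^2}f(ye^{i\alpha})\,dy,$$ where the integrand on the right is absolutely integrable on $(0,\infty)$ and the one on the left is absolutely integrable on $(0,R)$ for each $R>0$.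
   Context: For $\alpha\in(0,\frac{\pi}{2})$, $S^+_\alpha:=\{z\in\mathbb{C}: z=0 \text{ or } 0\le \mathrm{Arg}(z)\le\alpha\}$ (closed sector). *)

theory Defs
  imports "HOL-Complex_Analysis.Complex_Analysis"
begin

definition sector_plus :: "real \<Rightarrow> complex set" where
  "sector_plus \<alpha> = {z. z = 0 \<or> (0 \<le> Arg z \<and> Arg z \<le> \<alpha>)}"

end

theory Submission
  imports Defs "HOL-Real_Asymp.Real_Asymp"
begin

text \<open>Cauchy's theorem on the triangle with vertices \<open>0\<close>, \<open>R\<close> and \<open>R + i R tan \<alpha>\<close> turns the
  integral over \<open>[0, R]\<close> into the integral over the ray of angle \<open>\<alpha>\<close> plus the integral over the
  vertical side. On the ray the chirp \<open>exp (i a (z - y1)\<^sup>2)\<close> decays like a Gaussian, so the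
  ray integral converges absolutely; on the vertical side \<open>R + i t\<close> it decays like
  \<open>exp (-2 a R t)\<close>, which kills that side as \<open>R \<rightarrow> \<infinity>\<close> when \<open>|f z| \<le> A exp (B Im z)\<close>.
  Under the weaker bound \<open>A exp (B |z|)\<close> the factor \<open>exp (B R)\<close> survives on the vertical side,
  so one first inserts the Gaussian \<open>exp (-\<epsilon> (z - y0)\<^sup>2)\<close>: for small \<open>\<epsilon>\<close> it
  suppresses \<open>exp (B R)\<close> yet is still dominated on the ray by the decay of the chirp, uniformly in
  \<open>\<epsilon>\<close>. The rotation identity then holds for each small \<open>\<epsilon> > 0\<close>, and dominated
  convergence on the ray passes to \<open>\<epsilon> \<rightarrow> 0\<close>.\<close>

lemma in_sector_plusI:
  assumes "0 < \<alpha>" "\<alpha> < pi/2" "0 \<le> Im z" "Im z \<le> tan \<alpha> * Re z"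
  shows "z \<in> sector_plus \<alpha>"
proof (cases "z = 0")
  case True
  then show ?thesis by (simp add: sector_plus_def)
next
  case False
  have tan_pos: "tan \<alpha> > 0" using assms by (simp add: tan_gt_zero)
  have Re_pos: "Re z > 0"
  proof (rule ccontr)
    assume "\<not> Re z > 0"
    then have "tan \<alpha> * Re z \<le> 0" using tan_pos by (simp add: mult_nonneg_nonpos)
    then have "Im z = 0" using assms by linarith
    moreover have "Re z \<noteq> 0" using False \<open>Im z = 0\<close> complex_eq_iff by auto
    ultimately show False using assms \<open>\<not> Re z > 0\<close> tan_pos
      by (smt (verit) mult_pos_neg)
  qed
  define t where "t = Arg z"
  have cos_t: "cmod z * cos t = Re z" and sin_t: "cmod z * sin t = Im z"
    using Arg_eq[OF False] unfolding t_def
    by (metis Re_exp exp_Ln norm_exp_eq_Re Arg_def False, metis Im_exp exp_Ln norm_exp_eq_Re Arg_def False)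
  have norm_pos: "cmod z > 0" using False by simp
  have t_nonneg: "0 \<le> t" using assms(3) by (simp add: t_def Arg_less_0)
  have cos_pos: "cos t > 0" using cos_t Re_pos norm_pos by (metis zero_less_mult_pos)
  have t_less: "t < pi/2"
  proof (rule ccontr)
    assume "\<not> t < pi/2"
    moreover have "t \<le> pi" using Arg_le_pi t_def by simp
    ultimately have "cos (pi - t) \<ge> 0" by (intro cos_ge_zero) auto
    then have "cos t \<le> 0" by (simp add: cos_diff)
    then show False using cos_pos by simp
  qed
  have "tan t = Im z / Re z"
    unfolding tan_def using cos_t sin_t norm_pos by (metis mult_divide_mult_cancel_left_if norm_eq_zero False)
  also have "\<dots> \<le> tan \<alpha>" using assms Re_pos by (simp add: divide_le_eq)
  finally have "t \<le> \<alpha>" using tan_mono_le_eq[of t \<alpha>] t_nonneg t_less assms by simp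
  then show ?thesis using t_nonneg by (simp add: sector_plus_def t_def)
qed

lemma of_real_in_sector_plus: "0 \<le> y \<Longrightarrow> 0 \<le> \<alpha> \<Longrightarrow> (of_real y :: complex) \<in> sector_plus \<alpha>"
  by (simp add: sector_plus_def)

definition ray :: "real \<Rightarrow> real \<Rightarrow> complex" where
  "ray \<alpha> y = of_real y * exp (\<i> * of_real \<alpha>)"

lemma Re_ray [simp]: "Re (ray \<alpha> y) = y * cos \<alpha>"
  and Im_ray [simp]: "Im (ray \<alpha> y) = y * sin \<alpha>"
  and norm_ray [simp]: "norm (ray \<alpha> y) = \<bar>y\<bar>"
  by (simp_all add: ray_def Re_exp Im_exp norm_mult)

lemma continuous_on_ray [continuous_intros]:
  "continuous_on S (\<lambda>y. ray \<alpha> (g y))" if "continuous_on S g"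
  unfolding ray_def by (intro continuous_intros that)

lemma ray_in_sector_plus:
  assumes "0 < \<alpha>" "\<alpha> < pi/2" "0 \<le> y"
  shows "ray \<alpha> y \<in> sector_plus \<alpha>"
proof (rule in_sector_plusI[OF assms(1,2)])
  have "sin \<alpha> \<ge> 0" "cos \<alpha> > 0" using assms by (auto intro: sin_ge_zero cos_gt_zero_pi)
  then show "0 \<le> Im (ray \<alpha> y)" and "Im (ray \<alpha> y) \<le> tan \<alpha> * Re (ray \<alpha> y)"
    using assms by (simp_all add: tan_def)
qed

lemma vertical_in_sector_plus:
  assumes "0 < \<alpha>" "\<alpha> < pi/2" "0 \<le> t" "t \<le> R * tan \<alpha>"
  shows "of_real R + of_real t * \<i> \<in> sector_plus \<alpha>"
  by (rule in_sector_plusI) (use assms in \<open>simp_all add: mult.commute\<close>)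

lemma convex_sector_wedge: "convex {z. 0 \<le> Im z \<and> Im z \<le> m * Re z}"
proof -
  have "{z. 0 \<le> Im z \<and> Im z \<le> m * Re z} = {z. Im z \<ge> 0} \<inter> {z. inner (Complex (- m) 1) z \<le> 0}"
    by (auto simp: inner_complex_def)
  then show ?thesis by (metis convex_Int convex_halfspace_Im_ge convex_halfspace_le)
qed

lemma contour_integral_linepath_scaled:
  fixes g :: "complex \<Rightarrow> complex"
  assumes "T > 0" and "continuous_on (closed_segment a (a + of_real T * d)) g"
  shows "contour_integral (linepath a (a + of_real T * d)) g = integral {0..T} (\<lambda>t. g (a + of_real t * d)) * d"
proof -
  let ?h = "\<lambda>t. g (a + of_real t * d) * d"
  let ?I = "contour_integral (linepath a (a + of_real T * d)) g"
  have "(g has_contour_integral ?I) (linepath a (a + of_real T * d))"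
    using assms(2) by (intro has_contour_integral_integral contour_integrable_continuous_linepath)
  then have "((\<lambda>x. g (linepath a (a + of_real T * d) x) * (a + of_real T * d - a)) has_integral ?I) {0..1}"
    by (simp only: has_contour_integral_linepath)
  moreover have "(\<lambda>x. g (linepath a (a + of_real T * d) x) * (a + of_real T * d - a)) = (\<lambda>x. T *\<^sub>R ?h (T * x))"
    by (auto simp: linepath_def scaleR_conv_of_real algebra_simps fun_eq_iff)
  ultimately have "((\<lambda>x. ?h (T * x)) has_integral ?I /\<^sub>R T) {0..1}"
    using assms(1) has_integral_cmul_iff'[of T] by auto
  moreover have "((\<lambda>x. ?h (T *\<^sub>R x + 0)) has_integral (?I /\<^sub>R T ^ DIM(real)))
      (cbox ((0 - 0) /\<^sub>R T) ((T - 0) /\<^sub>R T)) \<longleftrightarrow> (?h has_integral ?I) (cbox 0 T)"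
    by (rule has_integral_affinity_iff[OF assms(1)])
  ultimately have "(?h has_integral ?I) {0..T}"
    using assms(1) by simp
  then have "integral {0..T} ?h = ?I" by (rule integral_unique)
  then show ?thesis by simp
qed

lemma integral_real_segment_eq_ray_minus_vertical:
  fixes g :: "complex \<Rightarrow> complex"
  assumes "0 < \<alpha>" "\<alpha> < pi/2" and hol: "g holomorphic_on sector_plus \<alpha>" and "R > 0"
  shows "integral {0..R} (\<lambda>x. g (of_real x)) =
     exp (\<i> * of_real \<alpha>) * integral {0..R / cos \<alpha>} (\<lambda>y. g (ray \<alpha> y))
     - \<i> * integral {0..R * tan \<alpha>} (\<lambda>t. g (of_real R + of_real t * \<i>))"
proof -
  define P where "P = of_real R + of_real (R * tan \<alpha>) * \<i>"
  have cos_pos: "cos \<alpha> > 0" using assms by (intro cos_gt_zero_pi) auto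
  have tan_pos: "tan \<alpha> > 0" using assms by (simp add: tan_gt_zero)
  have P_ray: "P = 0 + of_real (R / cos \<alpha>) * exp (\<i> * of_real \<alpha>)"
    using cos_pos by (simp add: P_def complex_eq_iff tan_def Re_exp Im_exp)
  have "convex hull {0, of_real R, P} \<subseteq> {z. 0 \<le> Im z \<and> Im z \<le> tan \<alpha> * Re z}"
    by (rule hull_minimal) (use convex_sector_wedge assms tan_pos in \<open>auto simp: P_def\<close>)
  also have "\<dots> \<subseteq> sector_plus \<alpha>" using in_sector_plusI assms by blast
  finally have holH: "g holomorphic_on convex hull {0, of_real R, P}"
    using hol holomorphic_on_subset by blast
  then have contH: "continuous_on (closed_segment u v) g" if "u \<in> {0, of_real R, P}" "v \<in> {0, of_real R, P}" for u v
    using that by (elim continuous_on_subset[OF holomorphic_on_imp_continuous_on])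
      (auto simp: segment_convex_hull intro!: hull_mono)
  have "contour_integral (linepath 0 (of_real R)) g + contour_integral (linepath (of_real R) P) g
         + contour_integral (linepath P 0) g = 0"
    by (rule has_chain_integral_chain_integral3[OF Cauchy_theorem_triangle[OF holH]])
  moreover have "contour_integral (linepath 0 (of_real R)) g = integral {0..R} (\<lambda>x. g (of_real x))"
    using contour_integral_linepath_Reals_eq[of 0 "of_real R" g] assms by simp
  moreover have "contour_integral (linepath (of_real R) P) g
      = integral {0..R * tan \<alpha>} (\<lambda>t. g (of_real R + of_real t * \<i>)) * \<i>"
    using contour_integral_linepath_scaled[of "R * tan \<alpha>" "of_real R" \<i> g] contH assms tan_pos
    unfolding P_def by simp
  moreover have "contour_integral (linepath P 0) g = - contour_integral (linepath 0 P) g"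
    by (metis contour_integral_reversepath reversepath_linepath valid_path_linepath)
  moreover have "contour_integral (linepath 0 P) g
      = integral {0..R / cos \<alpha>} (\<lambda>y. g (ray \<alpha> y)) * exp (\<i> * of_real \<alpha>)"
    using contour_integral_linepath_scaled[of "R / cos \<alpha>" 0 "exp (\<i> * of_real \<alpha>)" g] contH assms cos_pos
    unfolding P_ray by (simp add: ray_def)
  ultimately show ?thesis by (simp add: algebra_simps)
qed

lemma tendsto_integral_atLeastAtMost_at_top:
  fixes h :: "real \<Rightarrow> 'a::euclidean_space"
  assumes "h absolutely_integrable_on {a..}"
  shows "((\<lambda>L. integral {a..L} h) \<longlongrightarrow> integral {a..} h) at_top"
proof -
  have "h absolutely_integrable_on {a..L}" for L
    by (rule set_integrable_subset[OF assms]) auto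
  moreover have "((\<lambda>L. set_lebesgue_integral lebesgue {a..L} h) \<longlongrightarrow> set_lebesgue_integral lebesgue {a..} h) at_top"
    by (rule tendsto_set_lebesgue_integral_at_top[OF _ assms]) auto
  ultimately show ?thesis
    using set_lebesgue_integral_eq_integral(2)[OF assms] by (simp add: set_lebesgue_integral_eq_integral(2))
qed

lemma absolutely_integrable_on_atLeast_iff_greaterThan:
  fixes h :: "real \<Rightarrow> 'a::euclidean_space"
  shows "h absolutely_integrable_on {a..} \<longleftrightarrow> h absolutely_integrable_on {a<..}"
proof (rule absolutely_integrable_spike_set_eq)
  show "negligible {x \<in> {a..} - {a<..}. h x \<noteq> 0}" "negligible {x \<in> {a<..} - {a..}. h x \<noteq> 0}"
    by (rule negligible_subset[of "{a}"]; force)+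
qed

lemma integral_greaterThan_eq_atLeast:
  fixes h :: "real \<Rightarrow> 'a::euclidean_space"
  shows "integral {a<..} h = integral {a..} h"
  by (rule integral_spike_set) (auto intro: negligible_subset[of "{a}"])

lemma tendsto_integral_real_line_via_ray:
  fixes g :: "complex \<Rightarrow> complex"
  assumes "0 < \<alpha>" "\<alpha> < pi/2" and hol: "g holomorphic_on sector_plus \<alpha>"
    and ray_int: "(\<lambda>y. g (ray \<alpha> y)) absolutely_integrable_on {0..}"
    and vertical: "((\<lambda>R. integral {0..R * tan \<alpha>} (\<lambda>t. g (of_real R + of_real t * \<i>))) \<longlongrightarrow> 0) at_top"
  shows "((\<lambda>R. integral {0..R} (\<lambda>x. g (of_real x))) \<longlongrightarrow>
           exp (\<i> * of_real \<alpha>) * integral {0..} (\<lambda>y. g (ray \<alpha> y))) at_top"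
proof -
  have "cos \<alpha> > 0" using assms by (intro cos_gt_zero_pi) auto
  then have "filterlim (\<lambda>R. R / cos \<alpha>) at_top at_top" by real_asymp
  then have "((\<lambda>R. integral {0..R / cos \<alpha>} (\<lambda>y. g (ray \<alpha> y))) \<longlongrightarrow> integral {0..} (\<lambda>y. g (ray \<alpha> y))) at_top"
    by (rule filterlim_compose[OF tendsto_integral_atLeastAtMost_at_top[OF ray_int]])
  then have "((\<lambda>R. exp (\<i> * of_real \<alpha>) * integral {0..R / cos \<alpha>} (\<lambda>y. g (ray \<alpha> y))
       - \<i> * integral {0..R * tan \<alpha>} (\<lambda>t. g (of_real R + of_real t * \<i>)))
     \<longlongrightarrow> exp (\<i> * of_real \<alpha>) * integral {0..} (\<lambda>y. g (ray \<alpha> y)) - \<i> * 0) at_top"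
    by (intro tendsto_intros vertical)
  moreover have "\<forall>\<^sub>F R in at_top. exp (\<i> * of_real \<alpha>) * integral {0..R / cos \<alpha>} (\<lambda>y. g (ray \<alpha> y))
       - \<i> * integral {0..R * tan \<alpha>} (\<lambda>t. g (of_real R + of_real t * \<i>)) = integral {0..R} (\<lambda>x. g (of_real x))"
    using eventually_gt_at_top[of 0]
    by eventually_elim (simp add: integral_real_segment_eq_ray_minus_vertical[OF assms(1-3)])
  ultimately show ?thesis by (simp add: Lim_transform_eventually)
qed

lemma exp_quadratic_le_exp_neg:
  fixes k m :: real
  assumes "k > 0"
  obtains C where "C > 0" "\<And>y. exp (- k * y^2 + m * y) \<le> C * exp (- y)"
proof
  show "exp ((m + 1)^2 / (4 * k)) > 0" by simp
  fix y :: real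
  have "- k * y^2 + m * y = (m + 1)^2 / (4 * k) - y - (2 * k * y - (m + 1))^2 / (4 * k)"
    using assms by (simp add: field_simps power2_eq_square)
  also have "\<dots> \<le> (m + 1)^2 / (4 * k) - y" using assms by simp
  finally show "exp (- k * y^2 + m * y) \<le> exp ((m + 1)^2 / (4 * k)) * exp (- y)"
    by (simp flip: exp_add)
qed

lemma integrable_on_exp_neg: "(\<lambda>y::real. C * exp (- y)) integrable_on {0..}"
  using integrable_on_exp_minus_to_infinity[of 1 0] by (intro integrable_on_mult_right) simp

lemma has_integral_exp_neg_scaled:
  fixes \<kappa> T :: real
  assumes "\<kappa> > 0" "T \<ge> 0"
  shows "((\<lambda>t. exp (- \<kappa> * t)) has_integral (1 - exp (- \<kappa> * T)) / \<kappa>) {0..T}"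
proof -
  have "((\<lambda>t. exp (- \<kappa> * t)) has_integral (- exp (- \<kappa> * T) / \<kappa>) - (- exp (- \<kappa> * 0) / \<kappa>)) {0..T}"
    using assms
    by (intro fundamental_theorem_of_calculus)
       (auto intro!: derivative_eq_intros simp flip: has_real_derivative_iff_has_vector_derivative)
  then show ?thesis by (simp add: diff_divide_distrib)
qed

lemma norm_integral_exp_decay_le:
  fixes h :: "real \<Rightarrow> 'a::euclidean_space"
  assumes "continuous_on {0..T} h" "\<kappa> > 0" "T \<ge> 0"
    and "\<And>t. t \<in> {0..T} \<Longrightarrow> norm (h t) \<le> M * exp (- \<kappa> * t)"
  shows "norm (integral {0..T} h) \<le> M / \<kappa>"
proof -
  have "norm (h 0) \<le> M" using assms(3) assms(4)[of 0] by simp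
  then have "M \<ge> 0" using norm_ge_zero order_trans by blast
  have exp_int: "((\<lambda>t. M * exp (- \<kappa> * t)) has_integral M * ((1 - exp (- \<kappa> * T)) / \<kappa>)) {0..T}"
    by (intro has_integral_mult_right has_integral_exp_neg_scaled assms)
  have "norm (integral {0..T} h) \<le> integral {0..T} (\<lambda>t. M * exp (- \<kappa> * t))"
    using assms exp_int integrable_continuous_interval
    by (intro integral_norm_bound_integral) (auto simp: integrable_on_def)
  also have "\<dots> = M * ((1 - exp (- \<kappa> * T)) / \<kappa>)" using exp_int by (rule integral_unique)
  also have "\<dots> \<le> M * (1 / \<kappa>)"
    using assms \<open>M \<ge> 0\<close> by (intro mult_left_mono divide_right_mono) auto
  finally show ?thesis by simp
qed

lemma tendsto_0_integral_exp_decay: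
  fixes h :: "'b \<Rightarrow> real \<Rightarrow> 'a::euclidean_space"
  assumes "\<forall>\<^sub>F R in F. continuous_on {0..T R} (h R) \<and> T R \<ge> 0 \<and> \<kappa> R > 0 \<and>
             (\<forall>t\<in>{0..T R}. norm (h R t) \<le> M R * exp (- \<kappa> R * t))"
    and "((\<lambda>R. M R / \<kappa> R) \<longlongrightarrow> 0) F"
  shows "((\<lambda>R. integral {0..T R} (h R)) \<longlongrightarrow> 0) F"
proof (rule Lim_null_comparison[OF _ assms(2)])
  show "\<forall>\<^sub>F R in F. norm (integral {0..T R} (h R)) \<le> M R / \<kappa> R"
    using assms(1) by eventually_elim (auto intro: norm_integral_exp_decay_le)
qed

lemma absolutely_integrable_on_atLeast_dominated:
  fixes h :: "real \<Rightarrow> 'a::euclidean_space"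
  assumes "continuous_on {a..} h" "D integrable_on {a..}" "\<And>y. a \<le> y \<Longrightarrow> norm (h y) \<le> D y"
  shows "h absolutely_integrable_on {a..}"
proof (rule measurable_bounded_by_integrable_imp_absolutely_integrable)
  show "h \<in> borel_measurable (lebesgue_on {a..})"
    using assms(1) by (rule continuous_imp_measurable_on_sets_lebesgue) auto
qed (use assms in auto)

definition chirp :: "real \<Rightarrow> real \<Rightarrow> complex \<Rightarrow> complex" where
  "chirp a y1 z = exp (\<i> * of_real a * (z - of_real y1)^2)"

definition gaussian :: "real \<Rightarrow> real \<Rightarrow> complex \<Rightarrow> complex" where
  "gaussian e y0 z = exp (- of_real e * (z - of_real y0)^2)"

lemma gaussian_0 [simp]: "gaussian 0 y0 z = 1"
  by (simp add: gaussian_def)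

lemma norm_chirp: "norm (chirp a y1 z) = exp (- 2 * a * (Re z - y1) * Im z)"
  by (simp add: chirp_def power2_eq_square algebra_simps)

lemma norm_gaussian: "norm (gaussian e y0 z) = exp (- e * ((Re z - y0)^2 - (Im z)^2))"
  by (simp add: gaussian_def power2_eq_square algebra_simps)

lemma holomorphic_on_gaussian_chirp:
  "f holomorphic_on S \<Longrightarrow> (\<lambda>z. gaussian e y0 z * chirp a y1 z * f z) holomorphic_on S"
  unfolding gaussian_def chirp_def by (intro holomorphic_intros)

text \<open>What is left of the Gaussian on the ray after dropping \<open>exp (-e (y cos \<alpha> - y0)\<^sup>2)\<close>,
  namely \<open>exp (e y\<^sup>2 sin\<^sup>2 \<alpha>)\<close>, eats at most half of the chirp's decay
  \<open>exp (-a y\<^sup>2 sin (2\<alpha>))\<close> once \<open>e sin \<alpha> \<le> a cos \<alpha>\<close>.\<close>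
lemma norm_gaussian_chirp_ray_le:
  assumes "0 \<le> e" "e * sin \<alpha> \<le> a * cos \<alpha>" "0 \<le> sin \<alpha>"
  shows "norm (gaussian e y0 (ray \<alpha> y) * chirp a y1 (ray \<alpha> y))
           \<le> exp (- (a * cos \<alpha> * sin \<alpha>) * y^2 + 2 * a * y1 * sin \<alpha> * y)"
proof -
  have "e * sin \<alpha> ^ 2 \<le> a * cos \<alpha> * sin \<alpha>"
    using mult_right_mono[OF assms(2,3)] by (simp add: power2_eq_square mult.assoc)
  moreover have "0 \<le> e * (y * cos \<alpha> - y0)^2" using assms(1) by simp
  ultimately have "- e * ((y * cos \<alpha> - y0)^2 - (y * sin \<alpha>)^2) - 2 * a * (y * cos \<alpha> - y1) * (y * sin \<alpha>)
      \<le> - (a * cos \<alpha> * sin \<alpha>) * y^2 + 2 * a * y1 * sin \<alpha> * y"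
    using mult_right_mono[of "e * sin \<alpha> ^ 2" "a * cos \<alpha> * sin \<alpha>" "y^2"]
    by (simp add: algebra_simps power2_eq_square)
  then show ?thesis by (simp add: norm_mult norm_gaussian norm_chirp flip: exp_add)
qed

text \<open>Since \<open>t \<le> R tan \<alpha>\<close>, the growth \<open>exp (e t\<^sup>2)\<close> of the Gaussian on the vertical side
  costs at most half of the chirp's decay \<open>exp (-2 a R t)\<close>.\<close>
lemma norm_gaussian_chirp_vertical_le:
  assumes "0 \<le> e" "e * sin \<alpha> \<le> a * cos \<alpha>" "0 < cos \<alpha>" "0 \<le> R" "0 \<le> t" "t \<le> R * tan \<alpha>"
  shows "norm (gaussian e y0 (of_real R + of_real t * \<i>) * chirp a y1 (of_real R + of_real t * \<i>))
           \<le> exp (- e * (R - y0)^2) * exp (- (a * R - 2 * a * y1) * t)"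
proof -
  have "e * tan \<alpha> \<le> a" using assms(2,3) by (simp add: tan_def divide_le_eq mult.commute)
  have "e * t^2 = (e * t) * t" by (simp add: power2_eq_square)
  also have "\<dots> \<le> (e * t) * (R * tan \<alpha>)" using assms by (intro mult_left_mono) auto
  also have "\<dots> = (e * tan \<alpha>) * (R * t)" by simp
  also have "\<dots> \<le> a * (R * t)"
    using \<open>e * tan \<alpha> \<le> a\<close> assms by (intro mult_right_mono) auto
  finally have "e * t^2 \<le> a * (R * t)" .
  then show ?thesis
    by (simp add: norm_mult norm_gaussian norm_chirp flip: exp_add) (simp add: algebra_simps)
qed

locale sector_chirp =
  fixes a \<alpha> y1 :: real and f :: "complex \<Rightarrow> complex"
  assumes a_pos: "a > 0" and alpha: "0 < \<alpha>" "\<alpha> < pi/2"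
    and holo: "f holomorphic_on sector_plus \<alpha>"
begin

lemma sin_alpha_pos: "sin \<alpha> > 0" and cos_alpha_pos: "cos \<alpha> > 0"
  using alpha by (auto intro: sin_gt_zero cos_gt_zero_pi)

lemma continuous_on_gaussian_chirp:
  "continuous_on (sector_plus \<alpha>) (\<lambda>z. gaussian e y0 z * chirp a y1 z * f z)"
  using holomorphic_on_gaussian_chirp[OF holo] by (rule holomorphic_on_imp_continuous_on)

lemma gaussian_chirp_ray_dominated:
  assumes "A \<ge> 0" and bound: "\<And>y. 0 \<le> y \<Longrightarrow> norm (f (ray \<alpha> y)) \<le> A * exp (B * y)"
  obtains D where "D integrable_on {0..}"
    "\<And>e y. 0 \<le> e \<Longrightarrow> e * sin \<alpha> \<le> a * cos \<alpha> \<Longrightarrow> 0 \<le> y \<Longrightarrow>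
       norm (gaussian e y0 (ray \<alpha> y) * chirp a y1 (ray \<alpha> y) * f (ray \<alpha> y)) \<le> D y"
proof -
  have "a * cos \<alpha> * sin \<alpha> > 0" using a_pos sin_alpha_pos cos_alpha_pos by simp
  then obtain C where C: "\<And>y. exp (- (a * cos \<alpha> * sin \<alpha>) * y^2 + (2 * a * y1 * sin \<alpha> + B) * y) \<le> C * exp (- y)"
    using exp_quadratic_le_exp_neg by metis
  show ?thesis
  proof (rule that[of "\<lambda>y. A * C * exp (- y)"])
    fix e y :: real
    assume e: "0 \<le> e" "e * sin \<alpha> \<le> a * cos \<alpha>" and "0 \<le> y"
    have "norm (gaussian e y0 (ray \<alpha> y) * chirp a y1 (ray \<alpha> y) * f (ray \<alpha> y))
        \<le> exp (- (a * cos \<alpha> * sin \<alpha>) * y^2 + 2 * a * y1 * sin \<alpha> * y) * (A * exp (B * y))"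
      unfolding norm_mult[of _ "f _"]
      by (rule mult_mono[OF norm_gaussian_chirp_ray_le bound]) (use e sin_alpha_pos \<open>0 \<le> y\<close> in auto)
    also have "\<dots> = A * exp (- (a * cos \<alpha> * sin \<alpha>) * y^2 + (2 * a * y1 * sin \<alpha> + B) * y)"
      by (simp add: algebra_simps flip: exp_add)
    also have "\<dots> \<le> A * C * exp (- y)"
      using mult_left_mono[OF C \<open>A \<ge> 0\<close>] by (simp add: mult.assoc)
    finally show "norm (gaussian e y0 (ray \<alpha> y) * chirp a y1 (ray \<alpha> y) * f (ray \<alpha> y)) \<le> A * C * exp (- y)" .
  qed (rule integrable_on_exp_neg)
qed

lemma gaussian_chirp_ray_absolutely_integrable:
  assumes "A \<ge> 0" and bound: "\<And>y. 0 \<le> y \<Longrightarrow> norm (f (ray \<alpha> y)) \<le> A * exp (B * y)"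
    and "0 \<le> e" "e * sin \<alpha> \<le> a * cos \<alpha>"
  shows "(\<lambda>y. gaussian e y0 (ray \<alpha> y) * chirp a y1 (ray \<alpha> y) * f (ray \<alpha> y)) absolutely_integrable_on {0..}"
proof -
  obtain D where "D integrable_on {0..}"
    "\<And>y. 0 \<le> y \<Longrightarrow> norm (gaussian e y0 (ray \<alpha> y) * chirp a y1 (ray \<alpha> y) * f (ray \<alpha> y)) \<le> D y"
    using gaussian_chirp_ray_dominated[OF assms(1,2)] assms(3,4) by metis
  moreover have "continuous_on {0..} (\<lambda>y. gaussian e y0 (ray \<alpha> y) * chirp a y1 (ray \<alpha> y) * f (ray \<alpha> y))"
    by (rule continuous_on_compose2[OF continuous_on_gaussian_chirp])
       (auto intro!: continuous_intros ray_in_sector_plus alpha)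
  ultimately show ?thesis by (intro absolutely_integrable_on_atLeast_dominated) auto
qed

lemma gaussian_chirp_vertical_tendsto_0:
  assumes "0 \<le> e" "e * sin \<alpha> \<le> a * cos \<alpha>"
    and bound: "\<And>R t. 0 \<le> R \<Longrightarrow> 0 \<le> t \<Longrightarrow> t \<le> R * tan \<alpha> \<Longrightarrow>
                  norm (f (of_real R + of_real t * \<i>)) \<le> M R * exp (B * t)"
    and lim: "((\<lambda>R. M R * exp (- e * (R - y0)^2) / (a * R - 2 * a * y1 - B)) \<longlongrightarrow> 0) at_top"
  shows "((\<lambda>R. integral {0..R * tan \<alpha>} (\<lambda>t. gaussian e y0 (of_real R + of_real t * \<i>) *
            chirp a y1 (of_real R + of_real t * \<i>) * f (of_real R + of_real t * \<i>))) \<longlongrightarrow> 0) at_top"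
proof (rule tendsto_0_integral_exp_decay[where \<kappa> = "\<lambda>R. a * R - 2 * a * y1 - B", OF _ lim])
  have "\<forall>\<^sub>F R in at_top. a * R - 2 * a * y1 - B > 0" using a_pos by real_asymp
  then show "\<forall>\<^sub>F R in at_top. continuous_on {0..R * tan \<alpha>} (\<lambda>t. gaussian e y0 (of_real R + of_real t * \<i>) *
            chirp a y1 (of_real R + of_real t * \<i>) * f (of_real R + of_real t * \<i>)) \<and>
      0 \<le> R * tan \<alpha> \<and> 0 < a * R - 2 * a * y1 - B \<and>
      (\<forall>t\<in>{0..R * tan \<alpha>}. norm (gaussian e y0 (of_real R + of_real t * \<i>) *
            chirp a y1 (of_real R + of_real t * \<i>) * f (of_real R + of_real t * \<i>))
         \<le> M R * exp (- e * (R - y0)^2) * exp (- (a * R - 2 * a * y1 - B) * t))"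
    using eventually_ge_at_top[of 0]
  proof eventually_elim
    case (elim R)
    have "0 \<le> R * tan \<alpha>" using elim tan_gt_zero[OF alpha] by simp
    moreover have "continuous_on {0..R * tan \<alpha>} (\<lambda>t. gaussian e y0 (of_real R + of_real t * \<i>) *
            chirp a y1 (of_real R + of_real t * \<i>) * f (of_real R + of_real t * \<i>))"
      by (rule continuous_on_compose2[OF continuous_on_gaussian_chirp])
         (auto intro!: continuous_intros vertical_in_sector_plus alpha)
    moreover have "norm (gaussian e y0 (of_real R + of_real t * \<i>) *
            chirp a y1 (of_real R + of_real t * \<i>) * f (of_real R + of_real t * \<i>))
         \<le> M R * exp (- e * (R - y0)^2) * exp (- (a * R - 2 * a * y1 - B) * t)"
      if "t \<in> {0..R * tan \<alpha>}" for t
    proof -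
      have exp_combine: "exp (- (a * R - 2 * a * y1) * t) * exp (B * t) = exp (- (a * R - 2 * a * y1 - B) * t)"
        by (simp add: algebra_simps flip: exp_add)
      have "norm (gaussian e y0 (of_real R + of_real t * \<i>) *
            chirp a y1 (of_real R + of_real t * \<i>) * f (of_real R + of_real t * \<i>))
          \<le> exp (- e * (R - y0)^2) * exp (- (a * R - 2 * a * y1) * t) * (M R * exp (B * t))"
        unfolding norm_mult[of _ "f _"]
        by (rule mult_mono[OF norm_gaussian_chirp_vertical_le bound])
           (use that elim assms(1,2) cos_alpha_pos in auto)
      also have "\<dots> = M R * exp (- e * (R - y0)^2) * (exp (- (a * R - 2 * a * y1) * t) * exp (B * t))"
        by (simp only: ac_simps)
      finally show ?thesis unfolding exp_combine .
    qed
    ultimately show ?case using elim by blast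
  qed
qed

lemma chirp_tendsto_ray_integral_Im_bound:
  assumes "A \<ge> 0" "B \<ge> 0" and bound: "\<forall>z\<in>sector_plus \<alpha>. norm (f z) \<le> A * exp (B * Im z)"
  shows "(\<lambda>y. chirp a y1 (ray \<alpha> y) * f (ray \<alpha> y)) absolutely_integrable_on {0..}"
    and "((\<lambda>R. integral {0..R} (\<lambda>x. chirp a y1 (of_real x) * f (of_real x))) \<longlongrightarrow>
           exp (\<i> * of_real \<alpha>) * integral {0..} (\<lambda>y. chirp a y1 (ray \<alpha> y) * f (ray \<alpha> y))) at_top"
proof -
  have "norm (f (ray \<alpha> y)) \<le> A * exp (B * y)" if "0 \<le> y" for y
  proof -
    have "B * (y * sin \<alpha>) \<le> B * y"
      using assms(2) that by (intro mult_left_mono mult_left_le) auto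
    have "norm (f (ray \<alpha> y)) \<le> A * exp (B * (y * sin \<alpha>))"
      using bound[rule_format, OF ray_in_sector_plus[OF alpha that]] by simp
    also have "\<dots> \<le> A * exp (B * y)"
      using \<open>B * (y * sin \<alpha>) \<le> B * y\<close> assms(1) by (intro mult_left_mono) auto
    finally show ?thesis .
  qed
  from gaussian_chirp_ray_absolutely_integrable[OF assms(1) this, of 0]
  show ray_int: "(\<lambda>y. chirp a y1 (ray \<alpha> y) * f (ray \<alpha> y)) absolutely_integrable_on {0..}"
    using a_pos cos_alpha_pos by simp
  have "((\<lambda>R. integral {0..R * tan \<alpha>} (\<lambda>t. gaussian 0 y0 (of_real R + of_real t * \<i>) *
            chirp a y1 (of_real R + of_real t * \<i>) * f (of_real R + of_real t * \<i>))) \<longlongrightarrow> 0) at_top"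
  proof (rule gaussian_chirp_vertical_tendsto_0[where M = "\<lambda>_. A"])
    show "norm (f (of_real R + of_real t * \<i>)) \<le> A * exp (B * t)" if "0 \<le> t" "t \<le> R * tan \<alpha>" for R t
      using bound[rule_format, OF vertical_in_sector_plus[OF alpha that]] by simp
    show "((\<lambda>R. A * exp (- 0 * (R - y0)^2) / (a * R - 2 * a * y1 - B)) \<longlongrightarrow> 0) at_top"
      using a_pos by real_asymp
  qed (use a_pos cos_alpha_pos in auto)
  then show "((\<lambda>R. integral {0..R} (\<lambda>x. chirp a y1 (of_real x) * f (of_real x))) \<longlongrightarrow>
           exp (\<i> * of_real \<alpha>) * integral {0..} (\<lambda>y. chirp a y1 (ray \<alpha> y) * f (ray \<alpha> y))) at_top"
    using tendsto_integral_real_line_via_ray[OF alpha holomorphic_on_gaussian_chirp[OF holo, of 0 y0] _]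
      ray_int by simp
qed

lemma gaussian_chirp_real_absolutely_integrable:
  assumes "e > 0" "A \<ge> 0" and bound: "\<And>y. 0 \<le> y \<Longrightarrow> norm (f (of_real y)) \<le> A * exp (B * y)"
  shows "(\<lambda>y. gaussian e y0 (of_real y) * chirp a y1 (of_real y) * f (of_real y)) absolutely_integrable_on {0..}"
proof -
  obtain C where C: "\<And>y. exp (- e * y^2 + (2 * e * y0 + B) * y) \<le> C * exp (- y)"
    using exp_quadratic_le_exp_neg[OF assms(1)] by metis
  show ?thesis
  proof (rule absolutely_integrable_on_atLeast_dominated)
    show "(\<lambda>y. A * C * exp (- y)) integrable_on {0..}" by (rule integrable_on_exp_neg)
    fix y :: real
    assume "0 \<le> y"
    have "norm (gaussian e y0 (of_real y) * chirp a y1 (of_real y) * f (of_real y))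
        \<le> exp (- e * (y - y0)^2) * (A * exp (B * y))"
      using bound[OF \<open>0 \<le> y\<close>] by (simp add: norm_mult norm_gaussian norm_chirp)
    also have "\<dots> = A * exp (- e * y^2 + (2 * e * y0 + B) * y + (- e * y0^2))"
      by (simp add: algebra_simps power2_eq_square flip: exp_add)
    also have "\<dots> \<le> A * exp (- e * y^2 + (2 * e * y0 + B) * y)"
      using assms(1,2) by (intro mult_left_mono) auto
    also have "\<dots> \<le> A * C * exp (- y)"
      using mult_left_mono[OF C \<open>A \<ge> 0\<close>] by (simp add: mult.assoc)
    finally show "norm (gaussian e y0 (of_real y) * chirp a y1 (of_real y) * f (of_real y)) \<le> A * C * exp (- y)" .
  qed (rule continuous_on_compose2[OF continuous_on_gaussian_chirp continuous_on_of_real],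
       auto intro: of_real_in_sector_plus less_imp_le alpha)
qed

lemma gaussian_chirp_real_absolutely_integrable_on_interval:
  "(\<lambda>y. gaussian e y0 (of_real y) * chirp a y1 (of_real y) * f (of_real y)) absolutely_integrable_on {0..R}"
  by (rule absolutely_integrable_continuous_real,
      rule continuous_on_compose2[OF continuous_on_gaussian_chirp continuous_on_of_real])
     (use alpha in \<open>auto intro!: of_real_in_sector_plus\<close>)

end

locale sector_chirp_exp_bound = sector_chirp +
  fixes A B :: real
  assumes A: "A \<ge> 0" and B: "B \<ge> 0"
    and bound: "\<forall>z\<in>sector_plus \<alpha>. norm (f z) \<le> A * exp (B * norm z)"
begin

lemma norm_f_of_real_le: "0 \<le> y \<Longrightarrow> norm (f (of_real y)) \<le> A * exp (B * y)"
  using bound[rule_format, OF of_real_in_sector_plus[OF _ less_imp_le[OF alpha(1)]]] by simp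

lemma norm_f_ray_le: "0 \<le> y \<Longrightarrow> norm (f (ray \<alpha> y)) \<le> A * exp (B * y)"
  using bound[rule_format, OF ray_in_sector_plus[OF alpha]] by simp

lemma gaussian_chirp_integral_rotation:
  assumes "0 < e" "e * sin \<alpha> \<le> a * cos \<alpha>"
  shows "integral {0..} (\<lambda>y. gaussian e y0 (of_real y) * chirp a y1 (of_real y) * f (of_real y))
       = exp (\<i> * of_real \<alpha>) * integral {0..} (\<lambda>y. gaussian e y0 (ray \<alpha> y) * chirp a y1 (ray \<alpha> y) * f (ray \<alpha> y))"
proof (rule tendsto_unique[OF _ tendsto_integral_atLeastAtMost_at_top])
  show "(\<lambda>y. gaussian e y0 (of_real y) * chirp a y1 (of_real y) * f (of_real y)) absolutely_integrable_on {0..}"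
    using gaussian_chirp_real_absolutely_integrable[OF assms(1) A norm_f_of_real_le] .
  have "((\<lambda>R. integral {0..R * tan \<alpha>} (\<lambda>t. gaussian e y0 (of_real R + of_real t * \<i>) *
            chirp a y1 (of_real R + of_real t * \<i>) * f (of_real R + of_real t * \<i>))) \<longlongrightarrow> 0) at_top"
  proof (rule gaussian_chirp_vertical_tendsto_0[where M = "\<lambda>R. A * exp (B * R)"])
    fix R t :: real
    assume "0 \<le> R" "0 \<le> t" "t \<le> R * tan \<alpha>"
    then have "norm (f (of_real R + of_real t * \<i>)) \<le> A * exp (B * norm (of_real R + of_real t * \<i> :: complex))"
      using bound vertical_in_sector_plus[OF alpha] by blast
    also have "\<dots> \<le> A * exp (B * (R + t))"
      using A B norm_triangle_ineq[of "of_real R" "of_real t * \<i> :: complex"] \<open>0 \<le> R\<close> \<open>0 \<le> t\<close>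
      by (intro mult_left_mono) (auto intro: mult_left_mono simp: norm_mult)
    finally show "norm (f (of_real R + of_real t * \<i>)) \<le> A * exp (B * R) * exp (B * t)"
      by (simp add: distrib_left exp_add mult.assoc)
  next
    have "((\<lambda>R. A * exp (B * R + - e * (R - y0)^2) / (a * R - 2 * a * y1 - B)) \<longlongrightarrow> 0) at_top"
      using a_pos assms(1) by real_asymp
    then show "((\<lambda>R. A * exp (B * R) * exp (- e * (R - y0)^2) / (a * R - 2 * a * y1 - B)) \<longlongrightarrow> 0) at_top"
      by (simp only: exp_add mult.assoc)
  qed (use assms in auto)
  then show "((\<lambda>R. integral {0..R} (\<lambda>y. gaussian e y0 (of_real y) * chirp a y1 (of_real y) * f (of_real y)))
     \<longlongrightarrow> exp (\<i> * of_real \<alpha>) * integral {0..} (\<lambda>y. gaussian e y0 (ray \<alpha> y) * chirp a y1 (ray \<alpha> y) * f (ray \<alpha> y))) at_top"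
    using gaussian_chirp_ray_absolutely_integrable[OF A norm_f_ray_le] assms
    by (intro tendsto_integral_real_line_via_ray[OF alpha holomorphic_on_gaussian_chirp[OF holo]]) auto
qed simp


lemma gaussian_chirp_ray_integral_tendsto_at_right_0:
  "((\<lambda>e. integral {0..} (\<lambda>y. gaussian e y0 (ray \<alpha> y) * chirp a y1 (ray \<alpha> y) * f (ray \<alpha> y)))
     \<longlongrightarrow> integral {0..} (\<lambda>y. chirp a y1 (ray \<alpha> y) * f (ray \<alpha> y))) (at_right 0)"
proof -
  define e0 where "e0 = a * cos \<alpha> / sin \<alpha>"
  have "e0 > 0" using a_pos sin_alpha_pos cos_alpha_pos by (simp add: e0_def)
  have small: "e * sin \<alpha> \<le> a * cos \<alpha>" if "e \<le> e0" for e
    using mult_right_mono[OF that less_imp_le[OF sin_alpha_pos]] sin_alpha_pos by (simp add: e0_def)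
  obtain D where D: "D integrable_on {0..}"
    "\<And>e y. 0 \<le> e \<Longrightarrow> e * sin \<alpha> \<le> a * cos \<alpha> \<Longrightarrow> 0 \<le> y \<Longrightarrow>
       norm (gaussian e y0 (ray \<alpha> y) * chirp a y1 (ray \<alpha> y) * f (ray \<alpha> y)) \<le> D y"
    using gaussian_chirp_ray_dominated[OF A norm_f_ray_le] by metis
  have "((\<lambda>e. integral {0..} (\<lambda>y. gaussian e y0 (ray \<alpha> y) * chirp a y1 (ray \<alpha> y) * f (ray \<alpha> y)))
      \<longlongrightarrow> integral {0..} (\<lambda>y. gaussian 0 y0 (ray \<alpha> y) * chirp a y1 (ray \<alpha> y) * f (ray \<alpha> y))) (at_right 0)"
  proof (rule tendsto_at_right_sequentially[OF \<open>e0 > 0\<close>])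
    fix S :: "nat \<Rightarrow> real"
    assume S: "\<And>n. 0 < S n" "\<And>n. S n < e0" "S \<longlonglongrightarrow> 0"
    show "(\<lambda>n. integral {0..} (\<lambda>y. gaussian (S n) y0 (ray \<alpha> y) * chirp a y1 (ray \<alpha> y) * f (ray \<alpha> y)))
        \<longlonglongrightarrow> integral {0..} (\<lambda>y. gaussian 0 y0 (ray \<alpha> y) * chirp a y1 (ray \<alpha> y) * f (ray \<alpha> y))"
    proof (rule dominated_convergence(2)[OF _ D(1)])
      show "(\<lambda>y. gaussian (S n) y0 (ray \<alpha> y) * chirp a y1 (ray \<alpha> y) * f (ray \<alpha> y)) integrable_on {0..}" for n
        using gaussian_chirp_ray_absolutely_integrable[OF A norm_f_ray_le, of "S n"] S(1,2)[of n] small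
        by (simp add: absolutely_integrable_on_def less_imp_le)
      show "norm (gaussian (S n) y0 (ray \<alpha> y) * chirp a y1 (ray \<alpha> y) * f (ray \<alpha> y)) \<le> D y"
        if "y \<in> {0..}" for n y
        using D(2)[of "S n" y] S(1,2)[of n] small that by (simp add: less_imp_le)
      show "(\<lambda>n. gaussian (S n) y0 (ray \<alpha> y) * chirp a y1 (ray \<alpha> y) * f (ray \<alpha> y))
          \<longlonglongrightarrow> gaussian 0 y0 (ray \<alpha> y) * chirp a y1 (ray \<alpha> y) * f (ray \<alpha> y)" for y
        unfolding gaussian_def by (intro tendsto_intros S(3))
    qed
  qed
  then show ?thesis by simp
qed

lemma gaussian_chirp_integral_tendsto_at_right_0:
  "((\<lambda>e. integral {0..} (\<lambda>y. gaussian e y0 (of_real y) * chirp a y1 (of_real y) * f (of_real y)))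
     \<longlongrightarrow> exp (\<i> * of_real \<alpha>) * integral {0..} (\<lambda>y. chirp a y1 (ray \<alpha> y) * f (ray \<alpha> y))) (at_right 0)"
proof (rule Lim_transform_eventually)
  show "((\<lambda>e. exp (\<i> * of_real \<alpha>) * integral {0..} (\<lambda>y. gaussian e y0 (ray \<alpha> y) * chirp a y1 (ray \<alpha> y) * f (ray \<alpha> y)))
      \<longlongrightarrow> exp (\<i> * of_real \<alpha>) * integral {0..} (\<lambda>y. chirp a y1 (ray \<alpha> y) * f (ray \<alpha> y))) (at_right 0)"
    by (intro tendsto_intros gaussian_chirp_ray_integral_tendsto_at_right_0)
  have "\<forall>\<^sub>F e in at_right 0. e * sin \<alpha> < a * cos \<alpha>"
    using a_pos sin_alpha_pos cos_alpha_pos by real_asymp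
  then show "\<forall>\<^sub>F e in at_right 0.
      exp (\<i> * of_real \<alpha>) * integral {0..} (\<lambda>y. gaussian e y0 (ray \<alpha> y) * chirp a y1 (ray \<alpha> y) * f (ray \<alpha> y))
      = integral {0..} (\<lambda>y. gaussian e y0 (of_real y) * chirp a y1 (of_real y) * f (of_real y))"
    using eventually_at_right_less[of 0]
    by eventually_elim (simp add: gaussian_chirp_integral_rotation)
qed

end

theorem corollary2p2:
  fixes a y1 \<alpha> :: real and f :: "complex \<Rightarrow> complex" and \<Omega> :: "complex set"
  assumes "a > 0" and "0 < \<alpha>" and "\<alpha> < pi / 2"
    and "open \<Omega>" and "sector_plus \<alpha> \<subseteq> \<Omega>" and "f holomorphic_on \<Omega>"
  shows
   "(\<forall>A B. A \<ge> 0 \<longrightarrow> B \<ge> 0 \<longrightarrow>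
       (\<forall>z\<in>sector_plus \<alpha>. norm (f z) \<le> A * exp (B * norm z)) \<longrightarrow>
       (\<forall>y0::real.
          (\<forall>\<epsilon>>0. (\<lambda>y. complex_of_real (exp (- \<epsilon> * (y - y0)^2)) *
                         exp (\<i> * of_real (a * (y - y1)^2)) * f (of_real y))
                     absolutely_integrable_on {0<..}) \<and>
          (\<lambda>y. exp (\<i> * of_real a * (of_real y * exp (\<i> * of_real \<alpha>) - of_real y1)^2) *
                f (of_real y * exp (\<i> * of_real \<alpha>))) absolutely_integrable_on {0<..} \<and>
          ((\<lambda>\<epsilon>. integral {0<..} (\<lambda>y. complex_of_real (exp (- \<epsilon> * (y - y0)^2)) *
                         exp (\<i> * of_real (a * (y - y1)^2)) * f (of_real y)))
             \<longlongrightarrow> exp (\<i> * of_real \<alpha>) *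
                 integral {0<..} (\<lambda>y. exp (\<i> * of_real a * (of_real y * exp (\<i> * of_real \<alpha>) - of_real y1)^2) *
                   f (of_real y * exp (\<i> * of_real \<alpha>)))) (at_right 0))) \<and>
    (\<forall>A B. A \<ge> 0 \<longrightarrow> B \<ge> 0 \<longrightarrow>
       (\<forall>z\<in>sector_plus \<alpha>. norm (f z) \<le> A * exp (B * Im z)) \<longrightarrow>
       (\<forall>R>0. (\<lambda>y. exp (\<i> * of_real (a * (y - y1)^2)) * f (of_real y))
                  absolutely_integrable_on {0<..<R}) \<and>
       (\<lambda>y. exp (\<i> * of_real a * (of_real y * exp (\<i> * of_real \<alpha>) - of_real y1)^2) *
             f (of_real y * exp (\<i> * of_real \<alpha>))) absolutely_integrable_on {0<..} \<and>
       ((\<lambda>R. integral {0<..<R} (\<lambda>y. exp (\<i> * of_real (a * (y - y1)^2)) * f (of_real y)))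
          \<longlongrightarrow> exp (\<i> * of_real \<alpha>) *
              integral {0<..} (\<lambda>y. exp (\<i> * of_real a * (of_real y * exp (\<i> * of_real \<alpha>) - of_real y1)^2) *
                f (of_real y * exp (\<i> * of_real \<alpha>)))) at_top)"
proof -
  have holo: "f holomorphic_on sector_plus \<alpha>"
    using assms(5,6) holomorphic_on_subset by blast
  have real_eq: "complex_of_real (exp (- e * (y - y0)^2)) * exp (\<i> * of_real (a * (y - y1)^2)) * f (of_real y)
      = gaussian e y0 (of_real y) * chirp a y1 (of_real y) * f (of_real y)" for e y y0
    by (simp add: gaussian_def chirp_def mult.assoc flip: exp_of_real)
  have chirp_eq: "exp (\<i> * of_real (a * (y - y1)^2)) * f (of_real y) = chirp a y1 (of_real y) * f (of_real y)" for y
    by (simp add: chirp_def mult.assoc)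
  have ray_eq: "exp (\<i> * of_real a * (of_real y * exp (\<i> * of_real \<alpha>) - of_real y1)^2) * f (of_real y * exp (\<i> * of_real \<alpha>))
      = chirp a y1 (ray \<alpha> y) * f (ray \<alpha> y)" for y
    by (simp add: chirp_def ray_def)
  show ?thesis
    unfolding real_eq chirp_eq ray_eq integral_greaterThan_eq_atLeast integral_open_interval_real[symmetric]
      absolutely_integrable_on_atLeast_iff_greaterThan[symmetric] absolutely_integrable_on_Icc_iff_Ioo[symmetric]
  proof (intro conjI allI impI)
    fix A B y0 :: real
    assume "A \<ge> 0" "B \<ge> 0" and "\<forall>z\<in>sector_plus \<alpha>. norm (f z) \<le> A * exp (B * norm z)"
    then interpret sector_chirp_exp_bound a \<alpha> y1 f A B
      using assms(1-3) holo by unfold_locales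
    show "(\<lambda>y. gaussian e y0 (of_real y) * chirp a y1 (of_real y) * f (of_real y)) absolutely_integrable_on {0..}"
      if "e > 0" for e
      using that A norm_f_of_real_le by (rule gaussian_chirp_real_absolutely_integrable)
    show "(\<lambda>y. chirp a y1 (ray \<alpha> y) * f (ray \<alpha> y)) absolutely_integrable_on {0..}"
      using gaussian_chirp_ray_absolutely_integrable[OF A norm_f_ray_le, of 0 y0] a_pos cos_alpha_pos by simp
    show "((\<lambda>e. integral {0..} (\<lambda>y. gaussian e y0 (of_real y) * chirp a y1 (of_real y) * f (of_real y)))
        \<longlongrightarrow> exp (\<i> * of_real \<alpha>) * integral {0..} (\<lambda>y. chirp a y1 (ray \<alpha> y) * f (ray \<alpha> y))) (at_right 0)"
      by (rule gaussian_chirp_integral_tendsto_at_right_0)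
  next
    fix A B R :: real
    assume Im_bound: "A \<ge> 0" "B \<ge> 0" "\<forall>z\<in>sector_plus \<alpha>. norm (f z) \<le> A * exp (B * Im z)"
    interpret sector_chirp a \<alpha> y1 f
      using assms(1-3) holo by unfold_locales
    show "(\<lambda>y. chirp a y1 (of_real y) * f (of_real y)) absolutely_integrable_on {0..R}"
      using gaussian_chirp_real_absolutely_integrable_on_interval[where e = 0 and R = R] by simp
    show "(\<lambda>y. chirp a y1 (ray \<alpha> y) * f (ray \<alpha> y)) absolutely_integrable_on {0..}"
      and "((\<lambda>R. integral {0..R} (\<lambda>y. chirp a y1 (of_real y) * f (of_real y)))
        \<longlongrightarrow> exp (\<i> * of_real \<alpha>) * integral {0..} (\<lambda>y. chirp a y1 (ray \<alpha> y) * f (ray \<alpha> y))) at_top"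
      by (fact chirp_tendsto_ray_integral_Im_bound[OF Im_bound])+
  qed
qed

end
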